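(* Let $\chi,m\geq 2$ be integers. Then there exists a constant $\gamma=\gamma(\chi,m)>0$ such that the following holds. Let $F$ be a subhypergraph of a tournament hypergraph associated to $TT_\chi$, with vertex classes $V_1,\dots,V_\chi$. If $|V_i|\geq 1/\gamma$ for each $i\in[\chi]$ and $d(V_i,V_i,V_j)\geq 1-\gamma$ for every arc $(i,j)$ of $TT_\chi$, then $F$ contains a copy of $H(TT_\chi,m)$.
   Context: $TT_\chi$ is the transitive tournament on $[\chi]$. A 3-uniform hypergraph is a tournament hypergraph associated to a tournament $T_\chi$ on $[\chi]$ if its vertex set is partitioned into classes $A_1,\dots,A_\chi$ and its edges are exactly the triples $xyz$ with $x,y\in A_i$, $z\in A_j$, $(i,j)$ an arc of $T_\chi$; $H(T_\chi,m)$ is such a hypergraph with all classes of size $m$. For a 3-graph $F$ and $A,B,C\subseteq V(F)$, $E(A,B,C)$ is the set of ordered triples $(a,b,c)\in A\times B\times C$ of distinct vertices with $abc\in E(F)$, and $d(A,B,C)=|E(A,B,C)|$ divided by the number of ordered triples of distinct vertices in $A\times B\times C$. *)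

theory Defs
  imports Complex_Main
begin

text \<open>Vertex classes are indexed by 0..chi-1 (the paper's [chi] shifted by one).
  A tournament on {0..<chi} is a set of arcs (i,j).\<close>

definition is_tournament :: "nat \<Rightarrow> (nat \<times> nat) set \<Rightarrow> bool" where
  "is_tournament chi T \<longleftrightarrow> T \<subseteq> {0..<chi} \<times> {0..<chi} \<and>
     (\<forall>i<chi. \<forall>j<chi. i \<noteq> j \<longrightarrow> ((i,j) \<in> T \<longleftrightarrow> (j,i) \<notin> T)) \<and>
     (\<forall>i. (i,i) \<notin> T)"

definition TT :: "nat \<Rightarrow> (nat \<times> nat) set" where
  "TT chi = {(i,j). i < j \<and> j < chi}"

definition tourn_edges :: "nat \<Rightarrow> (nat \<times> nat) set \<Rightarrow> (nat \<Rightarrow> 'a set) \<Rightarrow> 'a set set" where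
  "tourn_edges chi T A = {{x,y,z} | x y z i j. (i,j) \<in> T \<and> i < chi \<and> j < chi \<and>
       x \<in> A i \<and> y \<in> A i \<and> x \<noteq> y \<and> z \<in> A j}"

definition classes_partition :: "nat \<Rightarrow> (nat \<Rightarrow> 'a set) \<Rightarrow> bool" where
  "classes_partition chi A \<longleftrightarrow> (\<forall>i<chi. \<forall>j<chi. i \<noteq> j \<longrightarrow> A i \<inter> A j = {})"

definition is_tournament_hypergraph ::
  "nat \<Rightarrow> (nat \<times> nat) set \<Rightarrow> (nat \<Rightarrow> 'a set) \<Rightarrow> 'a set \<Rightarrow> 'a set set \<Rightarrow> bool" where
  "is_tournament_hypergraph chi T A VF EF \<longleftrightarrow> is_tournament chi T \<and> classes_partition chi A \<and>
     VF = (\<Union>i<chi. A i) \<and> EF = tourn_edges chi T A"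

definition H_verts :: "nat \<Rightarrow> nat \<Rightarrow> (nat \<times> nat) set" where
  "H_verts chi m = {0..<chi} \<times> {0..<m}"

definition H_edges :: "nat \<Rightarrow> (nat \<times> nat) set \<Rightarrow> nat \<Rightarrow> (nat \<times> nat) set set" where
  "H_edges chi T m = tourn_edges chi T (\<lambda>i. {i} \<times> {0..<m})"

definition contains_copy :: "'a set \<Rightarrow> 'a set set \<Rightarrow> 'b set \<Rightarrow> 'b set set \<Rightarrow> bool" where
  "contains_copy VF EF VH EH \<longleftrightarrow>
     (\<exists>f. inj_on f VH \<and> f ` VH \<subseteq> VF \<and> (\<forall>e\<in>EH. f ` e \<in> EF))"

definition distinct_triples :: "'a set \<Rightarrow> 'a set \<Rightarrow> 'a set \<Rightarrow> ('a \<times> 'a \<times> 'a) set" where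
  "distinct_triples A B C = {(a,b,c). a \<in> A \<and> b \<in> B \<and> c \<in> C \<and> a \<noteq> b \<and> a \<noteq> c \<and> b \<noteq> c}"

definition edge_triples :: "'a set set \<Rightarrow> 'a set \<Rightarrow> 'a set \<Rightarrow> 'a set \<Rightarrow> ('a \<times> 'a \<times> 'a) set" where
  "edge_triples EF A B C = {(a,b,c) \<in> distinct_triples A B C. {a,b,c} \<in> EF}"

definition density :: "'a set set \<Rightarrow> 'a set \<Rightarrow> 'a set \<Rightarrow> 'a set \<Rightarrow> real" where
  "density EF A B C = real (card (edge_triples EF A B C)) / real (card (distinct_triples A B C))"

end

(* Embed H(TT_chi, m) at random: send the m vertices of class i independently and uniformly
   into V_i. Two vertices of the same class collide with probability 1 / |V_i| <= gamma, and an
   edge of H over the arc (i, j) lands on a triple of distinct vertices that is not an edge of F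
   with probability at most 1 - d(V_i, V_i, V_j) <= gamma. There are at most chi m^2 + chi^2 m^3
   such events, so for gamma = 1 / (chi m^2 + chi^2 m^3 + 1) the union bound leaves a map
   avoiding all of them; since the classes V_i are disjoint, it is a copy of H(TT_chi, m). *)
theory Submission
  imports Defs "HOL-Probability.Product_PMF"
begin

(* HOL-Probability's density of a measure would otherwise capture the name density of Defs. *)
hide_const (open) Nonnegative_Lebesgue_Integration.density

lemma pair_pmf_of_set:
  assumes "finite A" "A \<noteq> {}" "finite B" "B \<noteq> {}"
  shows "pair_pmf (pmf_of_set A) (pmf_of_set B) = pmf_of_set (A \<times> B)"
proof (rule pmf_eqI)
  fix z :: "'a \<times> 'b"
  show "pmf (pair_pmf (pmf_of_set A) (pmf_of_set B)) z = pmf (pmf_of_set (A \<times> B)) z"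
    using assms by (cases z) (simp add: pmf_pair indicator_times card_cartesian_product)
qed

lemma prob_pair_pmf_of_set_diagonal:
  assumes "finite A" "A \<noteq> {}"
  shows "measure_pmf.prob (pair_pmf (pmf_of_set A) (pmf_of_set A)) {(x, y). x = y} = 1 / card A"
proof -
  have "A \<times> A \<inter> {(x, y). x = y} = (\<lambda>x. (x, x)) ` A" by auto
  moreover have "card ((\<lambda>x. (x, x)) ` A) = card A" by (rule card_image) (auto intro: inj_onI)
  ultimately show ?thesis
    using assms by (simp add: pair_pmf_of_set measure_pmf_of_set card_cartesian_product)
qed

lemma map_pmf_Pi_pmf_split_component:
  assumes "finite A" "x \<in> A" and g: "\<And>f y. g (f(x := y)) = g f"
  shows "map_pmf (\<lambda>f. (f x, g f)) (Pi_pmf A dflt p) =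
           pair_pmf (p x) (map_pmf g (Pi_pmf (A - {x}) dflt p))"
proof -
  have "A = insert x (A - {x})" using assms by auto
  then have "Pi_pmf A dflt p =
      map_pmf (\<lambda>(y, f). f(x := y)) (pair_pmf (p x) (Pi_pmf (A - {x}) dflt p))"
    using assms by (metis Pi_pmf_insert finite_Diff Diff_iff singletonI)
  then show ?thesis
    by (simp add: pmf.map_comp o_def case_prod_unfold g flip: map_pair[of id, simplified])
qed

lemma Pi_pmf_component_pair:
  assumes "finite A" "x \<in> A" "y \<in> A" "x \<noteq> y"
  shows "map_pmf (\<lambda>f. (f x, f y)) (Pi_pmf A dflt p) = pair_pmf (p x) (p y)"
  using assms by (simp add: map_pmf_Pi_pmf_split_component Pi_pmf_component)

lemma Pi_pmf_component_triple:
  assumes "finite A" "x \<in> A" "y \<in> A" "z \<in> A" "x \<noteq> y" "x \<noteq> z" "y \<noteq> z"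
  shows "map_pmf (\<lambda>f. (f x, f y, f z)) (Pi_pmf A dflt p) = pair_pmf (p x) (pair_pmf (p y) (p z))"
  using assms by (simp add: map_pmf_Pi_pmf_split_component Pi_pmf_component)

lemma prob_Pi_pmf_of_set_collision:
  assumes "finite A" "x \<in> A" "y \<in> A" "x \<noteq> y" "S y = S x" "finite (S x)" "S x \<noteq> {}"
  shows "measure_pmf.prob (Pi_pmf A dflt (\<lambda>v. pmf_of_set (S v))) {f. f x = f y} = 1 / card (S x)"
proof -
  let ?X = "Pi_pmf A dflt (\<lambda>v. pmf_of_set (S v))"
  have "measure_pmf.prob ?X {f. f x = f y} =
      measure_pmf.prob (map_pmf (\<lambda>f. (f x, f y)) ?X) {(u, v). u = v}"
    by (simp add: vimage_def)
  then show ?thesis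
    using assms by (simp add: Pi_pmf_component_pair prob_pair_pmf_of_set_diagonal)
qed

lemma prob_Pi_pmf_of_set_triple:
  assumes "finite A" "x \<in> A" "y \<in> A" "z \<in> A" "x \<noteq> y" "x \<noteq> z" "y \<noteq> z"
    and "\<And>v. v \<in> A \<Longrightarrow> finite (S v) \<and> S v \<noteq> {}" and "T \<subseteq> S x \<times> S y \<times> S z"
  shows "measure_pmf.prob (Pi_pmf A dflt (\<lambda>v. pmf_of_set (S v))) {f. (f x, f y, f z) \<in> T} =
           card T / (card (S x) * card (S y) * card (S z))"
proof -
  let ?X = "Pi_pmf A dflt (\<lambda>v. pmf_of_set (S v))"
  have "measure_pmf.prob ?X {f. (f x, f y, f z) \<in> T} =
      measure_pmf.prob (map_pmf (\<lambda>f. (f x, f y, f z)) ?X) T"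
    by (simp add: vimage_def)
  moreover have "S x \<times> S y \<times> S z \<inter> T = T" using assms(9) by auto
  ultimately show ?thesis
    using assms by (simp add: Pi_pmf_component_triple pair_pmf_of_set measure_pmf_of_set
        card_cartesian_product)
qed

lemma ex_in_set_pmf_avoiding_events:
  fixes \<epsilon> :: real
  assumes "finite E" and prob: "\<And>e. e \<in> E \<Longrightarrow> measure_pmf.prob M (B e) \<le> \<epsilon>"
    and "card E * \<epsilon> < 1"
  shows "\<exists>\<omega>\<in>set_pmf M. \<forall>e\<in>E. \<omega> \<notin> B e"
proof (rule ccontr)
  assume "\<not> ?thesis"
  then have "set_pmf M \<subseteq> (\<Union>e\<in>E. B e)" by blast
  then have "1 = measure_pmf.prob M (\<Union>e\<in>E. B e)"
    by (simp add: measure_pmf.prob_eq_1 AE_measure_pmf_iff subset_eq)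
  also have "\<dots> \<le> (\<Sum>e\<in>E. measure_pmf.prob M (B e))"
    using assms(1) by (rule measure_pmf.finite_measure_subadditive_finite) simp
  also have "\<dots> \<le> card E * \<epsilon>" using prob by (rule sum_bounded_above)
  finally show False using assms(3) by simp
qed

definition non_edge_triples ::
  "'a set set \<Rightarrow> 'a set \<Rightarrow> 'a set \<Rightarrow> 'a set \<Rightarrow> ('a \<times> 'a \<times> 'a) set" where
  "non_edge_triples EF A B C = distinct_triples A B C - edge_triples EF A B C"

lemma card_non_edge_triples_le:
  fixes \<gamma> :: real
  assumes "finite A" "finite B" "finite C" "0 \<le> \<gamma>" and dense: "1 - \<gamma> \<le> density EF A B C"
  shows "card (non_edge_triples EF A B C) \<le> \<gamma> * (card A * card B * card C)"
proof -
  let ?D = "distinct_triples A B C" and ?Et = "edge_triples EF A B C"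
  have D_sub: "?D \<subseteq> A \<times> B \<times> C" by (auto simp: distinct_triples_def)
  then have fin: "finite ?D" using assms(1-3) by (auto intro: finite_subset)
  have Et_sub: "?Et \<subseteq> ?D" by (auto simp: edge_triples_def)
  have "card (?D - ?Et) \<le> \<gamma> * card ?D"
  proof (cases "card ?D = 0")
    case True
    then show ?thesis using fin by simp
  next
    case False
    then have "(1 - \<gamma>) * card ?D \<le> card ?Et"
      using dense by (simp add: Defs.density_def field_simps)
    moreover have "card ?Et \<le> card ?D" using Et_sub fin by (rule card_mono[rotated])
    ultimately show ?thesis
      using Et_sub fin by (simp add: card_Diff_subset finite_subset of_nat_diff algebra_simps)
  qed
  also have "\<dots> \<le> \<gamma> * (card A * card B * card C)"
    using card_mono[OF _ D_sub] assms
    by (intro mult_left_mono) (simp_all add: card_cartesian_product flip: of_nat_mult)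
  finally show ?thesis by (simp add: non_edge_triples_def)
qed

definition random_blowup_map ::
  "nat \<Rightarrow> nat \<Rightarrow> (nat \<Rightarrow> 'a set) \<Rightarrow> (nat \<times> nat \<Rightarrow> 'a) pmf" where
  "random_blowup_map chi m V = Pi_pmf (H_verts chi m) undefined (\<lambda>v. pmf_of_set (V (fst v)))"

definition good_blowup_map ::
  "nat \<Rightarrow> nat \<Rightarrow> (nat \<Rightarrow> 'a set) \<Rightarrow> 'a set set \<Rightarrow> (nat \<times> nat \<Rightarrow> 'a) \<Rightarrow> bool" where
  "good_blowup_map chi m V EF f \<longleftrightarrow>
     (\<forall>i<chi. \<forall>a<m. f (i, a) \<in> V i) \<and>
     (\<forall>i<chi. \<forall>a<m. \<forall>b<m. a \<noteq> b \<longrightarrow> f (i, a) \<noteq> f (i, b)) \<and>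
     (\<forall>i j a b c. i < j \<and> j < chi \<and> a < m \<and> b < m \<and> c < m \<and> a \<noteq> b \<longrightarrow>
        (f (i, a), f (i, b), f (j, c)) \<notin> non_edge_triples EF (V i) (V i) (V j))"

lemma random_blowup_map_into:
  assumes "\<forall>i<chi. finite (V i) \<and> V i \<noteq> {}"
    and "f \<in> set_pmf (random_blowup_map chi m V)" "i < chi" "a < m"
  shows "f (i, a) \<in> V i"
  using assms by (auto simp: random_blowup_map_def set_Pi_pmf H_verts_def PiE_dflt_def)

lemma prob_random_blowup_map_collision:
  assumes "\<forall>i<chi. finite (V i) \<and> V i \<noteq> {}"
    and "i < chi" "a < m" "b < m" "a \<noteq> b"
  shows "measure_pmf.prob (random_blowup_map chi m V) {f. f (i, a) = f (i, b)} = 1 / card (V i)"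
  unfolding random_blowup_map_def
  by (subst prob_Pi_pmf_of_set_collision) (use assms in \<open>auto simp: H_verts_def\<close>)

lemma prob_random_blowup_map_non_edge:
  fixes \<gamma> :: real
  assumes "\<forall>i<chi. finite (V i) \<and> V i \<noteq> {}"
    and "0 \<le> \<gamma>" "1 - \<gamma> \<le> density EF (V i) (V i) (V j)"
    and "i < j" "j < chi" "a < m" "b < m" "c < m" "a \<noteq> b"
  shows "measure_pmf.prob (random_blowup_map chi m V)
      {f. (f (i, a), f (i, b), f (j, c)) \<in> non_edge_triples EF (V i) (V i) (V j)} \<le> \<gamma>"
proof -
  let ?NE = "non_edge_triples EF (V i) (V i) (V j)"
  have "?NE \<subseteq> V i \<times> V i \<times> V j" by (auto simp: non_edge_triples_def distinct_triples_def)
  then have "measure_pmf.prob (random_blowup_map chi m V) {f. (f (i, a), f (i, b), f (j, c)) \<in> ?NE}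
      = card ?NE / (card (V i) * card (V i) * card (V j))"
    unfolding random_blowup_map_def
    by (subst prob_Pi_pmf_of_set_triple) (use assms in \<open>auto simp: H_verts_def\<close>)
  also have "\<dots> \<le> \<gamma>"
    using card_non_edge_triples_le[of "V i" "V i" "V j" \<gamma> EF] assms
    by (simp add: divide_le_eq card_gt_0_iff)
  finally show ?thesis .
qed

lemma ex_good_blowup_map:
  fixes V :: "nat \<Rightarrow> 'a set" and \<gamma> :: real
  assumes "0 < \<gamma>" and fin: "\<And>i. i < chi \<Longrightarrow> finite (V i)"
    and large: "\<And>i. i < chi \<Longrightarrow> 1 \<le> \<gamma> * card (V i)"
    and dense: "\<And>i j. i < j \<Longrightarrow> j < chi \<Longrightarrow> 1 - \<gamma> \<le> density EF (V i) (V i) (V j)"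
    and small: "real (chi * m * m + chi * chi * m * m * m) * \<gamma> < 1"
  shows "\<exists>f. good_blowup_map chi m V EF f"
proof -
  define events where
    "events = {..<chi} \<times> {..<m} \<times> {..<m} <+> {..<chi} \<times> {..<chi} \<times> {..<m} \<times> {..<m} \<times> {..<m}"
  define Bad :: "nat \<times> nat \<times> nat + nat \<times> nat \<times> nat \<times> nat \<times> nat \<Rightarrow> (nat \<times> nat \<Rightarrow> 'a) set"
    where "Bad = case_sum (\<lambda>(i, a, b). if a \<noteq> b then {f. f (i, a) = f (i, b)} else {})
      (\<lambda>(i, j, a, b, c). if i < j \<and> a \<noteq> b
         then {f. (f (i, a), f (i, b), f (j, c)) \<in> non_edge_triples EF (V i) (V i) (V j)} else {})"
  have "finite events" by (simp add: events_def)
  moreover have "card events * \<gamma> < 1"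
    using small by (simp add: events_def card_Plus card_cartesian_product mult.assoc)
  moreover have V: "\<forall>i<chi. finite (V i) \<and> V i \<noteq> {}"
    using fin large by fastforce
  have "measure_pmf.prob (random_blowup_map chi m V) (Bad e) \<le> \<gamma>" if "e \<in> events" for e
  proof (cases e)
    case (Inl e1)
    with that obtain i a b where "e1 = (i, a, b)" "i < chi" "a < m" "b < m"
      by (auto simp: events_def)
    then show ?thesis
      using Inl prob_random_blowup_map_collision[OF V] large V \<open>0 < \<gamma>\<close>
      by (simp add: Bad_def divide_le_eq mult.commute)
  next
    case (Inr e2)
    with that obtain i j a b c where "e2 = (i, j, a, b, c)" "j < chi" "a < m" "b < m" "c < m"
      by (auto simp: events_def)
    then show ?thesis
      using Inr prob_random_blowup_map_non_edge[OF V] dense \<open>0 < \<gamma>\<close>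
      by (simp add: Bad_def)
  qed
  ultimately obtain f where f: "f \<in> set_pmf (random_blowup_map chi m V)"
      and avoids: "\<forall>e\<in>events. f \<notin> Bad e"
    using ex_in_set_pmf_avoiding_events by blast
  have "f (i, a) \<in> V i" if "i < chi" "a < m" for i a
    using random_blowup_map_into[OF V f that] .
  moreover have "f (i, a) \<noteq> f (i, b)" if "i < chi" "a < m" "b < m" "a \<noteq> b" for i a b
    using avoids[rule_format, of "Inl (i, a, b)"] that by (simp add: Bad_def events_def InlI)
  moreover have "(f (i, a), f (i, b), f (j, c)) \<notin> non_edge_triples EF (V i) (V i) (V j)"
    if "i < j" "j < chi" "a < m" "b < m" "c < m" "a \<noteq> b" for i j a b c
    using avoids[rule_format, of "Inr (i, j, a, b, c)"] that by (simp add: Bad_def events_def InrI)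
  ultimately have "good_blowup_map chi m V EF f"
    unfolding good_blowup_map_def by blast
  then show ?thesis by blast
qed

lemma good_blowup_map_inj_on:
  assumes good: "good_blowup_map chi m V EF f"
    and disjoint: "\<And>i j. i < chi \<Longrightarrow> j < chi \<Longrightarrow> i \<noteq> j \<Longrightarrow> V i \<inter> V j = {}"
  shows "inj_on f (H_verts chi m)"
proof (rule inj_onI)
  fix x y assume "x \<in> H_verts chi m" "y \<in> H_verts chi m" "f x = f y"
  then obtain i a j b where xy: "x = (i, a)" "y = (j, b)" "i < chi" "j < chi" "a < m" "b < m"
      and eq: "f (i, a) = f (j, b)"
    by (auto simp: H_verts_def)
  show "x = y"
  proof (cases "i = j")
    case True
    have "a = b"
    proof (rule ccontr)
      assume "a \<noteq> b"
      then have "f (i, a) \<noteq> f (i, b)" using good xy by (simp add: good_blowup_map_def)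
      then show False using eq True by simp
    qed
    then show ?thesis using xy True by simp
  next
    case False
    have "f (i, a) \<in> V i" "f (j, b) \<in> V j" using good xy by (simp_all add: good_blowup_map_def)
    then show ?thesis using disjoint[OF xy(3,4) False] eq by auto
  qed
qed

lemma good_blowup_map_edge:
  assumes good: "good_blowup_map chi m V EF f"
    and disjoint: "\<And>i j. i < chi \<Longrightarrow> j < chi \<Longrightarrow> i \<noteq> j \<Longrightarrow> V i \<inter> V j = {}"
    and "e \<in> H_edges chi (TT chi) m"
  shows "f ` e \<in> EF"
proof -
  obtain i j a b c where e: "e = {(i, a), (i, b), (j, c)}"
      and ijabc: "i < j" "j < chi" "a < m" "b < m" "c < m" "a \<noteq> b"
    using assms(3) by (auto simp: H_edges_def tourn_edges_def TT_def)
  have "f (i, a) \<in> V i" "f (i, b) \<in> V i" "f (j, c) \<in> V j" "f (i, a) \<noteq> f (i, b)"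
    using good ijabc by (simp_all add: good_blowup_map_def)
  then have "(f (i, a), f (i, b), f (j, c)) \<in> distinct_triples (V i) (V i) (V j)"
    using disjoint[of i j] ijabc by (auto simp: distinct_triples_def)
  moreover have "(f (i, a), f (i, b), f (j, c)) \<notin> non_edge_triples EF (V i) (V i) (V j)"
    using good ijabc unfolding good_blowup_map_def by blast
  ultimately show ?thesis
    using e by (simp add: non_edge_triples_def edge_triples_def)
qed

lemma contains_copy_if_good_blowup_map:
  assumes "good_blowup_map chi m V EF f"
    and "\<And>i j. i < chi \<Longrightarrow> j < chi \<Longrightarrow> i \<noteq> j \<Longrightarrow> V i \<inter> V j = {}"
  shows "contains_copy (\<Union>i<chi. V i) EF (H_verts chi m) (H_edges chi (TT chi) m)"
  unfolding contains_copy_def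
proof (intro exI conjI ballI)
  show "inj_on f (H_verts chi m)" using assms by (rule good_blowup_map_inj_on)
  show "f ` H_verts chi m \<subseteq> (\<Union>i<chi. V i)"
    using assms(1) by (auto simp: good_blowup_map_def H_verts_def)
  show "f ` e \<in> EF" if "e \<in> H_edges chi (TT chi) m" for e
    using assms that by (rule good_blowup_map_edge)
qed

theorem lemma5p4:
  fixes chi m :: nat
  assumes "chi \<ge> 2" and "m \<ge> 2"
  shows "\<exists>\<gamma>::real. \<gamma> > 0 \<and>
    (\<forall>(V :: nat \<Rightarrow> nat set) (EF :: nat set set) (A :: nat \<Rightarrow> nat set) VT ET.
       is_tournament_hypergraph chi (TT chi) A VT ET \<and>
       (\<forall>i<chi. V i \<subseteq> A i) \<and> EF \<subseteq> ET \<and> EF \<subseteq> Pow (\<Union>i<chi. V i) \<and>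
       (\<forall>i<chi. finite (V i) \<and> real (card (V i)) \<ge> 1 / \<gamma>) \<and>
       (\<forall>(i,j)\<in>TT chi. density EF (V i) (V i) (V j) \<ge> 1 - \<gamma>)
       \<longrightarrow> contains_copy (\<Union>i<chi. V i) EF (H_verts chi m) (H_edges chi (TT chi) m))"
proof -
  define K where "K = chi * m * m + chi * chi * m * m * m"
  define \<gamma> :: real where "\<gamma> = 1 / (K + 1)"
  have pos: "0 < \<gamma>" and small: "real K * \<gamma> < 1" by (simp_all add: \<gamma>_def field_simps)
  show ?thesis
  proof (intro exI[of _ \<gamma>] conjI allI impI pos)
    fix V EF A VT ET
    assume H: "is_tournament_hypergraph chi (TT chi) A VT ET \<and>
       (\<forall>i<chi. V i \<subseteq> A i) \<and> EF \<subseteq> ET \<and> EF \<subseteq> Pow (\<Union>i<chi. V i) \<and>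
       (\<forall>i<chi. finite (V i) \<and> real (card (V i)) \<ge> 1 / \<gamma>) \<and>
       (\<forall>(i,j)\<in>TT chi. density EF (V i) (V i) (V j) \<ge> 1 - \<gamma>)"
    then have part: "classes_partition chi A" and sub: "\<forall>i<chi. V i \<subseteq> A i"
      by (simp_all add: is_tournament_hypergraph_def)
    have fin: "finite (V i)" and large: "1 \<le> \<gamma> * card (V i)" if "i < chi" for i
      using H that pos by (simp_all add: divide_le_eq mult.commute)
    have dense_arcs: "1 - \<gamma> \<le> density EF (V i) (V i) (V j)" if "i < j" "j < chi" for i j
      using H that by (simp add: TT_def)
    have disjoint: "V i \<inter> V j = {}" if "i < chi" "j < chi" "i \<noteq> j" for i j
      using part sub that unfolding classes_partition_def by blast
    have "\<exists>f. good_blowup_map chi m V EF f"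
      by (rule ex_good_blowup_map[OF pos fin large dense_arcs small[unfolded K_def]])
    then obtain f where "good_blowup_map chi m V EF f" ..
    then show "contains_copy (\<Union>i<chi. V i) EF (H_verts chi m) (H_edges chi (TT chi) m)"
      using disjoint by (rule contains_copy_if_good_blowup_map)
  qed
qed

end
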